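(* Let $Q_\bullet=(Q_k)_{k\ge0}$ be a weakly increasing Markov chain on $\{1,2,\dots\}$ (i.e. transition matrix $(p_{i,j})$ with $p_{i,j}=0$ for $j<i$), with initial distribution $p_{0,j}:=P(Q_0=j)$ such that $p_{0,j}>0$ for infinitely many $j$. Let $G_j:=\sum_{k\ge0}\mathbf 1(Q_k=j)$ and suppose $P(G_j<\infty)=1$ and $P(G_j=0)<1$ for every $j$, and that $G_1,G_2,\dots$ are independent. Then $$h_j:=P(G_j\ge1)=\frac{p_{0,j}}{p_{0,j}+p_{0,j+1}+\cdots},\qquad \prod_{j\ge1}(1-h_j)=0,$$ and the transition matrix has the form $$p_{i,j}=\mathbf 1(j=i)p_{i,i}+\mathbf 1(j>i)(1-p_{i,i})\,h_j\prod_{k=i+1}^{j-1}(1-h_k)=\mathbf 1(j=i)p_{i,i}+\mathbf 1(j>i)(1-p_{i,i})\frac{p_{0,j}}{p_{0,i+1}+p_{0,i+2}+\cdots}$$ for some self-transition probabilities $p_{i,i}<1$. Moreover (still assuming independence of the $G_j$) the following are equivalent: (a) $p_{i,i}=h_i$ for all $i$; (b) each $G_j$ is geometrically distributed on $\{0,1,2,\dots\}$; (c) $Q_\bullet$ is the weak record chain derived from $(p_{0,j})$. Also the following are equivalent: (a') $p_{i,i}=0$ for all $i$; (b') each $G_j$ has a Bernoulli distribution on $\{0,1\}$; (c') $Q_\bullet$ is the strict record chain derived from $(p_{0,j})$. In all cases, the chain $Q_\bullet$ observed only at its changes of state is a copy of the strict record chain derived from $(p_{0,j})$.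
   Context: Given a probability distribution $(p_{0,j})_{j\ge1}$ on positive integers, the weak record chain is the sequence of weak upper record values of an i.i.d. sequence with law $(p_{0,j})$; it is Markov with initial law $(p_{0,j})$ and transition matrix $p^{\le}_{i,j}=p_{0,j}\mathbf 1(i\le j)/(p_{0,i}+p_{0,i+1}+\cdots)$. The strict record chain is the sequence of strict upper record values; it is Markov with initial law $(p_{0,j})$ and transition matrix $p^{<}_{i,j}=p_{0,j}\mathbf 1(i<j)/(p_{0,i+1}+p_{0,i+2}+\cdots)$. *)

theory Defs
  imports "HOL-Probability.Probability"
begin

definition markov_chain_law ::
  "'a measure \<Rightarrow> (nat \<Rightarrow> 'a \<Rightarrow> nat) \<Rightarrow> (nat \<Rightarrow> real) \<Rightarrow> (nat \<Rightarrow> nat \<Rightarrow> real) \<Rightarrow> bool" where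
  "markov_chain_law M X p0 P \<longleftrightarrow>
     (\<forall>(n::nat) (s::nat \<Rightarrow> nat).
        measure M {\<omega> \<in> space M. \<forall>k\<le>n. X k \<omega> = s k}
          = p0 (s 0) * (\<Prod>k<n. P (s k) (s (Suc k))))"

definition visits :: "(nat \<Rightarrow> 'a \<Rightarrow> nat) \<Rightarrow> nat \<Rightarrow> 'a \<Rightarrow> enat" where
  "visits X j \<omega> = (if finite {k. X k \<omega> = j} then enat (card {k. X k \<omega> = j}) else \<infinity>)"

definition hit_prob :: "'a measure \<Rightarrow> (nat \<Rightarrow> 'a \<Rightarrow> nat) \<Rightarrow> nat \<Rightarrow> real" where
  "hit_prob M X j = measure M {\<omega> \<in> space M. visits X j \<omega> \<ge> 1}"

definition tail :: "(nat \<Rightarrow> real) \<Rightarrow> nat \<Rightarrow> real" where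
  "tail p0 i = (\<Sum>k. p0 (i + k))"

definition weak_record_matrix :: "(nat \<Rightarrow> real) \<Rightarrow> nat \<Rightarrow> nat \<Rightarrow> real" where
  "weak_record_matrix p0 i j = (if i \<le> j then p0 j / tail p0 i else 0)"

definition strict_record_matrix :: "(nat \<Rightarrow> real) \<Rightarrow> nat \<Rightarrow> nat \<Rightarrow> real" where
  "strict_record_matrix p0 i j = (if i < j then p0 j / tail p0 (i + 1) else 0)"

text \<open>The chain observed only at its changes of state: the n-th distinct value
  visited (the path is a.s. weakly increasing and visits infinitely many values).\<close>
definition jump_chain :: "(nat \<Rightarrow> 'a \<Rightarrow> nat) \<Rightarrow> nat \<Rightarrow> 'a \<Rightarrow> nat" where
  "jump_chain X n \<omega> = enumerate (range (\<lambda>k. X k \<omega>)) n"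

end

theory Submission
  imports Defs
begin

text \<open>
  Almost surely the path of \<open>Q\<close> is weakly increasing and visits each state finitely often,
  so it is determined by which states it visits and how long it stays in each of them, and
  independence of the visit counts factorises the probability of every pattern of visited and
  skipped states. The chain starts at or above \<open>j\<close> exactly when it skips \<open>1, \<dots>, j - 1\<close>, so
  \<open>tail p0 j = (\<Prod>k\<in>{1..<j}. 1 - h k)\<close>, which gives \<open>h j = p0 j / tail p0 j\<close>.
  Each visit to \<open>i\<close> is the last one with probability \<open>1 - p i i\<close>, so the expected number of
  visits to \<open>i\<close> is \<open>h i / (1 - p i i)\<close>; computing the expected number of jumps from \<open>i\<close> to \<open>j\<close>
  once by the Markov property and once by independence (visit \<open>i\<close>, skip \<open>i + 1, \<dots>, j - 1\<close>,
  visit \<open>j\<close>) gives \<open>p i j\<close>. By the Markov property every sojourn in \<open>j\<close> has a geometric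
  length with parameter \<open>p j j\<close>, which determines the law of the visit count and yields both
  characterisations. For the jump chain, the probability of a visiting pattern telescopes
  into a product of strict record transition probabilities.
\<close>

section \<open>Finite-dimensional laws\<close>

lemma all_less_add_iff:
  fixes a b :: nat
  shows "(\<forall>k<a + b. P k) \<longleftrightarrow> (\<forall>k<a. P k) \<and> (\<forall>r<b. P (a + r))"
proof
  assume H: "\<forall>k<a + b. P k"
  show "(\<forall>k<a. P k) \<and> (\<forall>r<b. P (a + r))"
  proof (intro conjI allI impI)
    fix k
    assume "k < a"
    then show "P k" using H trans_less_add1[of k a b] by blast
  next
    fix r
    assume "r < b"
    then show "P (a + r)" using H by simp
  qed
next
  assume H: "(\<forall>k<a. P k) \<and> (\<forall>r<b. P (a + r))"
  show "\<forall>k<a + b. P k"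
  proof (intro allI impI)
    fix k
    assume "k < a + b"
    then show "P k" using H[THEN conjunct2, rule_format, of "k - a"] H by (cases "k < a") auto
  qed
qed

fun path_weight :: "(nat \<Rightarrow> nat \<Rightarrow> real) \<Rightarrow> nat \<Rightarrow> nat list \<Rightarrow> real" where
  "path_weight P x [] = 1"
| "path_weight P x (y # ys) = P x y * path_weight P y ys"

lemma path_weight_append:
  "path_weight P x (xs @ ys) = path_weight P x xs * path_weight P (last (x # xs)) ys"
  by (induction xs arbitrary: x) auto

lemma path_weight_eq_prod:
  "path_weight P x ys = (\<Prod>k<length ys. P ((x # ys) ! k) ((x # ys) ! Suc k))"
  by (induction ys arbitrary: x) (simp_all add: prod.lessThan_Suc_shift del: prod.lessThan_Suc)

lemma path_weight_replicate: "path_weight P j (replicate l j) = P j j ^ l"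
  by (induction l) auto

lemma path_prob_eq_0_if_hits_0:
  fixes P :: "nat \<Rightarrow> nat \<Rightarrow> real"
  assumes "p0 0 = 0" and "\<And>i. i \<ge> 1 \<Longrightarrow> P i 0 = 0"
  shows "k \<le> n \<Longrightarrow> s k = 0 \<Longrightarrow> p0 (s 0) * (\<Prod>k<n. P (s k) (s (Suc k))) = 0"
proof (induction k)
  case 0
  then show ?case using assms(1) by simp
next
  case (Suc l)
  show ?case
  proof (cases "s l = 0")
    case True
    with Suc show ?thesis by simp
  next
    case False
    then have "P (s l) (s (Suc l)) = 0" using Suc.prems assms(2)[of "s l"] by simp
    moreover have "l \<in> {..<n}" using Suc.prems by simp
    ultimately show ?thesis by (metis finite_lessThan mult_zero_right prod_zero)
  qed
qed

lemma markov_chain_law_iff_same_transitions: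
  assumes law: "markov_chain_law M X p0 P"
    and p0_0: "p0 0 = 0" and p0_pos: "\<And>i. i \<ge> 1 \<Longrightarrow> p0 i > 0"
    and P_0: "\<And>i. i \<ge> 1 \<Longrightarrow> P i 0 = 0"
  shows "markov_chain_law M X p0 W \<longleftrightarrow> (\<forall>i\<ge>1. \<forall>j. W i j = P i j)"
proof
  assume W: "markov_chain_law M X p0 W"
  show "\<forall>i\<ge>1. \<forall>j. W i j = P i j"
  proof (intro allI impI)
    fix i j :: nat
    assume i: "i \<ge> 1"
    define s where "s k = (if k = 0 then i else j)" for k :: nat
    have "p0 i * W i j = p0 i * P i j"
      using W[unfolded markov_chain_law_def, rule_format, of 1 s]
        law[unfolded markov_chain_law_def, rule_format, of 1 s]
      by (simp add: s_def)
    then show "W i j = P i j" using p0_pos[OF i] by simp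
  qed
next
  assume WP: "\<forall>i\<ge>1. \<forall>j. W i j = P i j"
  have same: "p0 (s 0) * (\<Prod>k<n. W (s k) (s (Suc k))) = p0 (s 0) * (\<Prod>k<n. P (s k) (s (Suc k)))"
    for n and s :: "nat \<Rightarrow> nat"
  proof (cases "\<exists>k\<le>n. s k = 0")
    case True
    then obtain k where k: "k \<le> n" "s k = 0" by blast
    have W_0: "W i 0 = 0" if "i \<ge> 1" for i using WP P_0 that by simp
    have "p0 (s 0) * (\<Prod>k<n. W (s k) (s (Suc k))) = 0"
      by (rule path_prob_eq_0_if_hits_0[of p0 W k n s]) (use p0_0 W_0 k in auto)
    moreover have "p0 (s 0) * (\<Prod>k<n. P (s k) (s (Suc k))) = 0"
      by (rule path_prob_eq_0_if_hits_0[of p0 P k n s]) (use p0_0 P_0 k in auto)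
    ultimately show ?thesis by (simp only:)
  next
    case False
    then have "W (s k) (s (Suc k)) = P (s k) (s (Suc k))" if "k < n" for k
      using WP that by (metis less_imp_le_nat less_one not_le)
    then show ?thesis by simp
  qed
  then show "markov_chain_law M X p0 W"
    using law unfolding markov_chain_law_def by (metis (no_types, lifting))
qed

section \<open>Visits of weakly increasing paths\<close>

lemma visits_ge_1_iff: "visits X j \<omega> \<ge> 1 \<longleftrightarrow> (\<exists>t. X t \<omega> = j)"
  unfolding visits_def
  by (auto simp: one_enat_def Suc_le_eq card_gt_0_iff dest: infinite_imp_nonempty)

lemma visits_eq_0_iff: "visits X j \<omega> = 0 \<longleftrightarrow> (\<forall>t. X t \<omega> \<noteq> j)"
  unfolding visits_def by (auto simp: zero_enat_def dest: infinite_imp_nonempty)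

lemma visits_less_infinity_iff: "visits X j \<omega> < \<infinity> \<longleftrightarrow> finite {t. X t \<omega> = j}"
  unfolding visits_def by auto

lemma visits_eq_enat_iff:
  "visits X j \<omega> = enat n \<longleftrightarrow> finite {t. X t \<omega> = j} \<and> card {t. X t \<omega> = j} = n"
  unfolding visits_def by auto

lemma enat_le_1_iff: "x \<le> (1::enat) \<longleftrightarrow> x = enat 0 \<or> x = enat 1"
  by (cases x) (auto simp: one_enat_def)

definition visit_pattern :: "nat set \<Rightarrow> nat \<Rightarrow> enat set" where
  "visit_pattern V k = (if k \<in> V then {x. x \<ge> 1} else {0})"

lemma visits_in_visit_pattern_iff:
  "visits X k \<omega> \<in> visit_pattern V k \<longleftrightarrow> (k \<in> range (\<lambda>t. X t \<omega>) \<longleftrightarrow> k \<in> V)"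
proof -
  have "k \<in> range (\<lambda>t. X t \<omega>) \<longleftrightarrow> (\<exists>t. X t \<omega> = k)" by auto
  then show ?thesis by (simp add: visit_pattern_def visits_ge_1_iff visits_eq_0_iff)
qed

lemma last_visit_exists:
  assumes "finite {t. f t = i}" and "f t = i"
  shows "\<exists>n. f n = i \<and> f (Suc n) \<noteq> i"
proof -
  let ?n = "Max {t. f t = i}"
  have "f ?n = i" using Max_in[OF assms(1)] assms(2) by auto
  moreover have "f (Suc ?n) \<noteq> i" using Max_ge[OF assms(1), of "Suc ?n"] by auto
  ultimately show ?thesis by blast
qed

lemma first_visit_exists:
  fixes f :: "nat \<Rightarrow> 'a"
  assumes "f t = j"
  shows "\<exists>m. f m = j \<and> (m = 0 \<or> f (m - 1) \<noteq> j)"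
proof -
  define m where "m = (LEAST t. f t = j)"
  have "f m = j" unfolding m_def using assms by (rule LeastI)
  moreover have "m = 0 \<or> f (m - 1) \<noteq> j"
  proof (cases m)
    case (Suc k)
    then have "f k \<noteq> j" using not_less_Least[of k "\<lambda>t. f t = j"] unfolding m_def by auto
    with Suc show ?thesis by simp
  qed simp
  ultimately show ?thesis by blast
qed

lemma mono_last_visit_unique:
  fixes f :: "nat \<Rightarrow> 'a::order"
  assumes "mono f" "f n = i" "f (Suc n) \<noteq> i" "f m = i" "f (Suc m) \<noteq> i"
  shows "n = m"
proof -
  have False if "n' < m'" "f n' = i" "f (Suc n') \<noteq> i" "f m' = i" for n' m'
  proof -
    have "f n' \<le> f (Suc n')" "f (Suc n') \<le> f m'"
      using \<open>mono f\<close> that(1) by (auto intro: monoD)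
    with that show False by simp
  qed
  then show ?thesis using assms by (metis linorder_neqE_nat)
qed

lemma mono_first_visit_unique:
  fixes f :: "nat \<Rightarrow> 'a::order"
  assumes "mono f" "f m = j" "m = 0 \<or> f (m - 1) \<noteq> j" "f m' = j" "m' = 0 \<or> f (m' - 1) \<noteq> j"
  shows "m = m'"
proof -
  have False if "n < n'" "f n = j" "f n' = j" "f (n' - 1) \<noteq> j" for n n'
  proof -
    have "n \<le> n' - 1" "n' - 1 \<le> n'" using that(1) by auto
    then have "f n \<le> f (n' - 1)" "f (n' - 1) \<le> f n'" using \<open>mono f\<close> by (auto intro: monoD)
    with that show False by simp
  qed
  then show ?thesis using assms by (metis linorder_neqE_nat not_less_zero)
qed

lemma mono_jump_iff:
  fixes f :: "nat \<Rightarrow> nat"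
  assumes "mono f" "i < j"
  shows "(\<exists>n. f n = i \<and> f (Suc n) = j)
    \<longleftrightarrow> i \<in> range f \<and> j \<in> range f \<and> (\<forall>k. i < k \<longrightarrow> k < j \<longrightarrow> k \<notin> range f)"
proof
  assume "\<exists>n. f n = i \<and> f (Suc n) = j"
  then obtain n where n: "f n = i" "f (Suc n) = j" by blast
  have "f t \<le> i \<or> j \<le> f t" for t
  proof (cases "t \<le> n")
    case True
    then show ?thesis using \<open>mono f\<close> n by (metis monoD)
  next
    case False
    then have "Suc n \<le> t" by simp
    then show ?thesis using \<open>mono f\<close> n by (metis monoD)
  qed
  then have "k \<notin> range f" if "i < k" "k < j" for k
    using that by (auto simp: not_le[symmetric])
  with n show "i \<in> range f \<and> j \<in> range f \<and> (\<forall>k. i < k \<longrightarrow> k < j \<longrightarrow> k \<notin> range f)"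
    by (metis rangeI)
next
  assume "i \<in> range f \<and> j \<in> range f \<and> (\<forall>k. i < k \<longrightarrow> k < j \<longrightarrow> k \<notin> range f)"
  then obtain t t' where t: "f t = i" and t': "f t' = j"
    and gap: "\<And>k. i < k \<Longrightarrow> k < j \<Longrightarrow> k \<notin> range f" by blast
  have before: "s < t'" if "f s = i" for s
  proof (rule ccontr)
    assume "\<not> s < t'"
    then have "f t' \<le> f s" using \<open>mono f\<close> by (simp add: monoD)
    with t' that \<open>i < j\<close> show False by simp
  qed
  then have "{s. f s = i} \<subseteq> {..<t'}" by blast
  then have "finite {s. f s = i}" by (rule finite_subset) simp
  from last_visit_exists[OF this t] obtain n where n: "f n = i" "f (Suc n) \<noteq> i" by blast
  have "f n \<le> f (Suc n)" "f (Suc n) \<le> f t'"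
    using \<open>mono f\<close> before[OF n(1)] by (simp_all add: monoD)
  then have "i < f (Suc n)" "f (Suc n) \<le> j" using n t' by simp_all
  then have "f (Suc n) = j" using gap[of "f (Suc n)"] by (metis le_neq_implies_less rangeI)
  with n show "\<exists>n. f n = i \<and> f (Suc n) = j" by blast
qed

lemma mono_visit_times_eq_interval:
  fixes f :: "nat \<Rightarrow> nat"
  assumes "mono f" "f m = j" "m = 0 \<or> f (m - 1) \<noteq> j"
    and "\<And>r. r < L \<Longrightarrow> f (m + r) = j" "f (m + L) \<noteq> j"
  shows "{t. f t = j} = {m..<m + L}"
proof (intro equalityI subsetI)
  fix t
  assume t: "t \<in> {t. f t = j}"
  have "\<not> t < m"
  proof
    assume "t < m"
    then have "f t \<le> f (m - 1)" "f (m - 1) \<le> f m" using monoD[OF \<open>mono f\<close>] by simp_all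
    then show False using t assms(2,3) \<open>t < m\<close> by auto
  qed
  moreover have "\<not> m + L \<le> t"
  proof
    assume "m + L \<le> t"
    then have "f m \<le> f (m + L)" "f (m + L) \<le> f t" using monoD[OF \<open>mono f\<close>] by simp_all
    then show False using t assms(2,5) by auto
  qed
  ultimately show "t \<in> {m..<m + L}" by auto
next
  fix t
  assume "t \<in> {m..<m + L}"
  then have "t = m + (t - m)" "t - m < L" by auto
  then show "t \<in> {t. f t = j}" using assms(4)[of "t - m"] by simp
qed

lemma mono_card_visit_times_iff:
  fixes f :: "nat \<Rightarrow> nat"
  assumes "mono f" "n \<ge> 1"
  shows "finite {t. f t = j} \<and> card {t. f t = j} = n
    \<longleftrightarrow> (\<exists>m. (m = 0 \<or> f (m - 1) \<noteq> j) \<and> (\<forall>r<n. f (m + r) = j) \<and> f (m + n) \<noteq> j)"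
proof
  assume fin: "finite {t. f t = j} \<and> card {t. f t = j} = n"
  with assms(2) have "{t. f t = j} \<noteq> {}" using card_gt_0_iff[of "{t. f t = j}"] by simp
  then obtain t where t: "f t = j" by blast
  from first_visit_exists[of f t j, OF t] obtain m where m: "f m = j" "m = 0 \<or> f (m - 1) \<noteq> j" by blast
  from last_visit_exists[OF conjunct1[OF fin] t] obtain e where e: "f e = j" "f (Suc e) \<noteq> j" by blast
  have "m \<le> e"
  proof (rule ccontr)
    assume "\<not> m \<le> e"
    then have "f e \<le> f (Suc e)" "f (Suc e) \<le> f m" using \<open>mono f\<close> by (simp_all add: monoD)
    with m e show False by simp
  qed
  define L where "L = Suc e - m"
  have run: "f (m + r) = j" if "r < L" for r
  proof -
    have "f m \<le> f (m + r)" "f (m + r) \<le> f e"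
      using \<open>mono f\<close> that unfolding L_def by (simp_all add: monoD)
    with m e show ?thesis by simp
  qed
  have leave: "f (m + L) \<noteq> j" using e \<open>m \<le> e\<close> by (simp add: L_def)
  have "{t. f t = j} = {m..<m + L}" by (rule mono_visit_times_eq_interval[OF assms(1) m run leave])
  with fin have "L = n" by simp
  with m run leave show "\<exists>m. (m = 0 \<or> f (m - 1) \<noteq> j) \<and> (\<forall>r<n. f (m + r) = j) \<and> f (m + n) \<noteq> j"
    by blast
next
  assume "\<exists>m. (m = 0 \<or> f (m - 1) \<noteq> j) \<and> (\<forall>r<n. f (m + r) = j) \<and> f (m + n) \<noteq> j"
  then obtain m where m: "m = 0 \<or> f (m - 1) \<noteq> j" "\<And>r. r < n \<Longrightarrow> f (m + r) = j" "f (m + n) \<noteq> j"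
    by blast
  have "f m = j" using m(2)[of 0] assms(2) by simp
  then have "{t. f t = j} = {m..<m + n}" by (rule mono_visit_times_eq_interval[OF assms(1) _ m(1) m(2,3)])
  then show "finite {t. f t = j} \<and> card {t. f t = j} = n" by simp
qed

section \<open>Enumerating infinite sets of natural numbers\<close>

lemma strict_mono_on_atMost_iff:
  fixes s :: "nat \<Rightarrow> 'a::order"
  shows "strict_mono_on {..n} s \<longleftrightarrow> (\<forall>k<n. s k < s (Suc k))"
proof
  assume sm: "strict_mono_on {..n} s"
  show "\<forall>k<n. s k < s (Suc k)"
  proof (intro allI impI)
    fix k
    assume "k < n"
    then show "s k < s (Suc k)" by (intro strict_mono_onD[OF sm]) auto
  qed
next
  assume step: "\<forall>k<n. s k < s (Suc k)"
  show "strict_mono_on {..n} s"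
  proof (rule strict_mono_onI)
    fix r t
    assume rt: "r \<in> {..n}" "t \<in> {..n}" "r < t"
    show "s r < s t"
      by (rule lift_Suc_mono_less_ivl[where N = "{..<n}"]) (use step rt in auto)
  qed
qed

lemma enumerate_lessThan:
  fixes S :: "nat set"
  assumes "infinite S"
  shows "S \<inter> {..<enumerate S n} = enumerate S ` {..<n}"
proof (intro equalityI subsetI)
  fix x
  assume x: "x \<in> S \<inter> {..<enumerate S n}"
  then obtain k where "enumerate S k = x" using enumerate_Ex[OF assms] by blast
  with x assms show "x \<in> enumerate S ` {..<n}" by auto
next
  fix x
  assume "x \<in> enumerate S ` {..<n}"
  then show "x \<in> S \<inter> {..<enumerate S n}" using assms enumerate_in_set[OF assms] by auto
qed

lemma enumerate_eq_if_initial_segment: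
  fixes S :: "nat set"
  assumes inf: "infinite S" and sm: "strict_mono_on {..n} s" and eq: "S \<inter> {..s n} = s ` {..n}"
    and k: "k \<le> n"
  shows "enumerate S k = s k"
proof -
  have "s k \<in> S" using eq k strict_mono_on_leD[OF sm, of k n] by auto
  then obtain m where m: "enumerate S m = s k" using enumerate_Ex[OF inf] by blast
  have "S \<inter> {..<s k} = s ` {..<k}"
  proof (intro equalityI subsetI)
    fix x
    assume x: "x \<in> S \<inter> {..<s k}"
    then have "x \<in> s ` {..n}" using eq strict_mono_on_leD[OF sm, of k n] k by auto
    then obtain l where "l \<le> n" "x = s l" by auto
    with x k sm show "x \<in> s ` {..<k}" by (auto simp: strict_mono_on_less)
  next
    fix x
    assume "x \<in> s ` {..<k}"
    then obtain l where "l < k" "x = s l" by auto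
    with k sm eq show "x \<in> S \<inter> {..<s k}" by (auto simp: strict_mono_on_less)
  qed
  then have "s ` {..<k} = enumerate S ` {..<m}" using enumerate_lessThan[OF inf, of m] m by simp
  moreover have "inj_on s {..<k}"
    using k by (intro inj_on_subset[OF strict_mono_on_imp_inj_on[OF sm]]) auto
  moreover have "inj_on (enumerate S) {..<m}"
    using inj_enumerate[OF inf] by (rule inj_on_subset) auto
  ultimately have "k = m" by (metis card_image card_lessThan)
  with m show ?thesis by simp
qed

lemma enumerate_atMost_eq_iff:
  fixes S :: "nat set"
  assumes inf: "infinite S"
  shows "(\<forall>k\<le>n. enumerate S k = s k) \<longleftrightarrow> strict_mono_on {..n} s \<and> S \<inter> {..s n} = s ` {..n}"
proof
  assume e: "\<forall>k\<le>n. enumerate S k = s k"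
  have "strict_mono_on {..n} s"
  proof (rule strict_mono_onI)
    fix r t
    assume "r \<in> {..n}" "t \<in> {..n}" "r < t"
    with e inf show "s r < s t" by (metis atMost_iff enumerate_mono)
  qed
  moreover have "S \<inter> {..s n} = s ` {..n}"
  proof (intro equalityI subsetI)
    fix x
    assume x: "x \<in> S \<inter> {..s n}"
    then obtain k where k: "enumerate S k = x" using enumerate_Ex[OF inf] by blast
    with x e have "enumerate S k \<le> enumerate S n" by auto
    with inf have "k \<le> n" by simp
    with k e show "x \<in> s ` {..n}" by auto
  next
    fix x
    assume "x \<in> s ` {..n}"
    then obtain k where k: "k \<le> n" "x = s k" by auto
    with inf have "enumerate S k \<le> enumerate S n" by simp
    with e k enumerate_in_set[OF inf, of k] show "x \<in> S \<inter> {..s n}" by auto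
  qed
  ultimately show "strict_mono_on {..n} s \<and> S \<inter> {..s n} = s ` {..n}" by blast
next
  assume "strict_mono_on {..n} s \<and> S \<inter> {..s n} = s ` {..n}"
  with enumerate_eq_if_initial_segment[OF inf] show "\<forall>k\<le>n. enumerate S k = s k" by blast
qed

lemma Int_atMost_eq_iff: "B \<subseteq> {..N} \<Longrightarrow> S \<inter> {..N} = B \<longleftrightarrow> (\<forall>y\<le>N. y \<in> S \<longleftrightarrow> y \<in> B)"
  for N :: nat
  by (auto simp: set_eq_iff)

lemma inter_atMost_eq_image_iff:
  fixes S :: "nat set" and s :: "nat \<Rightarrow> nat"
  assumes sm: "strict_mono_on {..n} s" and "0 \<notin> S"
  shows "S \<inter> {..s n} = s ` {..n} \<longleftrightarrow> s 0 \<ge> 1 \<and> (\<forall>k\<in>{1..s n}. k \<in> S \<longleftrightarrow> k \<in> s ` {..n})"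
proof
  assume eq: "S \<inter> {..s n} = s ` {..n}"
  then have "s 0 \<in> S" by blast
  with \<open>0 \<notin> S\<close> have "s 0 \<ge> 1" by (cases "s 0") auto
  moreover have "k \<in> S \<longleftrightarrow> k \<in> s ` {..n}" if "k \<in> {1..s n}" for k
  proof -
    have "k \<in> S \<longleftrightarrow> k \<in> S \<inter> {..s n}" using that by auto
    with eq show ?thesis by simp
  qed
  ultimately show "s 0 \<ge> 1 \<and> (\<forall>k\<in>{1..s n}. k \<in> S \<longleftrightarrow> k \<in> s ` {..n})" by blast
next
  assume R: "s 0 \<ge> 1 \<and> (\<forall>k\<in>{1..s n}. k \<in> S \<longleftrightarrow> k \<in> s ` {..n})"
  have img: "s l \<in> {1..s n}" if "l \<le> n" for l
    using R strict_mono_on_leD[OF sm, of 0 l] strict_mono_on_leD[OF sm, of l n] that by auto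
  show "S \<inter> {..s n} = s ` {..n}"
  proof (intro equalityI subsetI)
    fix x
    assume x: "x \<in> S \<inter> {..s n}"
    with \<open>0 \<notin> S\<close> have "x \<in> {1..s n}" by (cases x) auto
    with R x show "x \<in> s ` {..n}" by (metis IntD1)
  next
    fix x
    assume "x \<in> s ` {..n}"
    then obtain l where "l \<le> n" "x = s l" by auto
    with img[of l] R show "x \<in> S \<inter> {..s n}" by auto
  qed
qed

lemma (in prob_space) prob_indep_vars_all:
  assumes "indep_vars M' X I" "finite J" "J \<subseteq> I" "\<And>j. j \<in> J \<Longrightarrow> A j \<in> sets (M' j)"
  shows "prob {\<omega>\<in>space M. \<forall>j\<in>J. X j \<omega> \<in> A j} = (\<Prod>j\<in>J. prob {\<omega>\<in>space M. X j \<omega> \<in> A j})"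
proof (cases "J = {}")
  case True
  then show ?thesis by (simp add: prob_space)
next
  case False
  have "{\<omega>\<in>space M. \<forall>j\<in>J. X j \<omega> \<in> A j} = (\<Inter>j\<in>J. X j -` A j \<inter> space M)"
    using False by auto
  moreover have "{\<omega>\<in>space M. X j \<omega> \<in> A j} = X j -` A j \<inter> space M" for j by auto
  ultimately show ?thesis using indep_varsD[OF assms(1) False assms(2-4)] by simp
qed

lemma (in finite_measure) sums_measure_AE_disjoint:
  assumes A: "\<And>n. A n \<in> sets M" and B: "B \<in> sets M"
    and disj: "AE \<omega> in M. \<forall>n m. \<omega> \<in> A n \<longrightarrow> \<omega> \<in> A m \<longrightarrow> n = m"
    and union: "AE \<omega> in M. \<omega> \<in> B \<longleftrightarrow> (\<exists>n. \<omega> \<in> A n)"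
  shows "(\<lambda>n. measure M (A n)) sums measure M B"
proof -
  have "AE \<omega> in M. (\<forall>n m. \<omega> \<in> A n \<longrightarrow> \<omega> \<in> A m \<longrightarrow> n = m) \<and> (\<omega> \<in> B \<longleftrightarrow> (\<exists>n. \<omega> \<in> A n))"
    using disj union by eventually_elim auto
  from AE_E3[OF this] obtain N where good: "\<And>\<omega>. \<omega> \<in> space M - N \<Longrightarrow>
      (\<forall>n m. \<omega> \<in> A n \<longrightarrow> \<omega> \<in> A m \<longrightarrow> n = m) \<and> (\<omega> \<in> B \<longleftrightarrow> (\<exists>n. \<omega> \<in> A n))"
    and N: "N \<in> null_sets M" by blast
  have in_space: "\<omega> \<in> A n \<Longrightarrow> \<omega> \<in> space M" for \<omega> n
    using A[THEN sets.sets_into_space] by auto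
  have "disjoint_family (\<lambda>n. A n - N)"
    unfolding disjoint_family_on_def
  proof (intro ballI impI)
    fix m n :: nat
    assume "m \<noteq> n"
    show "(A m - N) \<inter> (A n - N) = {}"
    proof (rule ccontr)
      assume "(A m - N) \<inter> (A n - N) \<noteq> {}"
      then obtain \<omega> where \<omega>: "\<omega> \<in> A m" "\<omega> \<in> A n" "\<omega> \<notin> N" by auto
      then have "\<omega> \<in> space M - N" using in_space by auto
      from good[OF this] \<omega> \<open>m \<noteq> n\<close> show False by auto
    qed
  qed
  moreover have "range (\<lambda>n. A n - N) \<subseteq> sets M" using A N by auto
  ultimately have "(\<lambda>n. measure M (A n - N)) sums measure M (\<Union>n. A n - N)"
    by (intro measure_UNION) (auto simp: emeasure_eq_measure)
  moreover have "(\<Union>n. A n - N) = B - N"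
  proof (intro equalityI subsetI)
    fix \<omega>
    assume "\<omega> \<in> (\<Union>n. A n - N)"
    then obtain n where \<omega>: "\<omega> \<in> A n" "\<omega> \<notin> N" by auto
    then have "\<omega> \<in> space M - N" using in_space by auto
    from good[OF this] \<omega> show "\<omega> \<in> B - N" by auto
  next
    fix \<omega>
    assume \<omega>: "\<omega> \<in> B - N"
    then have "\<omega> \<in> space M - N" using B[THEN sets.sets_into_space] by auto
    from good[OF this] \<omega> show "\<omega> \<in> (\<Union>n. A n - N)" by auto
  qed
  ultimately show ?thesis using measure_Diff_null_set[OF A N] measure_Diff_null_set[OF B N] by simp
qed

section \<open>Weakly increasing Markov chains\<close>

locale weakly_increasing_chain = prob_space M for M :: "'a measure" +
  fixes Q :: "nat \<Rightarrow> 'a \<Rightarrow> nat" and p0 :: "nat \<Rightarrow> real" and p :: "nat \<Rightarrow> nat \<Rightarrow> real"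
  assumes Q_measurable[measurable]: "\<And>k. Q k \<in> measurable M (count_space UNIV)"
    and Q_pos: "\<And>k \<omega>. \<omega> \<in> space M \<Longrightarrow> Q k \<omega> \<ge> 1"
    and p0_nonneg: "\<And>j. p0 j \<ge> 0"
    and p0_zero: "p0 0 = 0"
    and p0_sums: "p0 sums 1"
    and p0_inf: "infinite {j. p0 j > 0}"
    and p_nonneg: "\<And>i j. i \<ge> 1 \<Longrightarrow> p i j \<ge> 0"
    and p_sums: "\<And>i. i \<ge> 1 \<Longrightarrow> (\<lambda>j. p i j) sums 1"
    and p_incr: "\<And>i j. i \<ge> 1 \<Longrightarrow> j < i \<Longrightarrow> p i j = 0"
    and markov: "markov_chain_law M Q p0 p"
begin

lemma tail_eq_1_minus_sum: "tail p0 j = 1 - (\<Sum>k<j. p0 k)"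
proof -
  have "suminf p0 = (\<Sum>n. p0 (n + j)) + (\<Sum>k<j. p0 k)"
    using p0_sums by (intro suminf_split_initial_segment) (rule sums_summable)
  then show ?thesis using p0_sums unfolding tail_def by (simp add: sums_iff add.commute)
qed

lemma tail_Suc: "tail p0 (Suc j) = tail p0 j - p0 j"
  unfolding tail_eq_1_minus_sum by simp

lemma tail_pos: "tail p0 j > 0"
proof -
  obtain k where k: "k \<ge> j" "p0 k > 0"
    using p0_inf by (metis (mono_tags) finite_nat_set_iff_bounded_le mem_Collect_eq nat_le_linear)
  have "summable (\<lambda>n. p0 (j + n))"
    using p0_sums summable_iff_shift[of p0 j] by (simp add: add.commute sums_iff)
  moreover have "0 < p0 (j + (k - j))" using k by simp
  ultimately show ?thesis unfolding tail_def
    by (intro suminf_pos2[of _ "k - j"]) (auto simp: p0_nonneg add.commute)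
qed

lemma tail_tendsto_0: "(\<lambda>n. tail p0 n) \<longlonglongrightarrow> 0"
proof -
  have "(\<lambda>n. 1 - (\<Sum>k<n. p0 k)) \<longlonglongrightarrow> 1 - 1"
    using p0_sums unfolding sums_def by (intro tendsto_intros)
  then show ?thesis unfolding tail_eq_1_minus_sum by simp
qed

definition path_prefix :: "'a \<Rightarrow> nat \<Rightarrow> nat list" where
  "path_prefix \<omega> n = map (\<lambda>t. Q t \<omega>) [0..<n]"

definition cylinder :: "nat list \<Rightarrow> 'a set" where
  "cylinder xs = {\<omega> \<in> space M. \<forall>k<length xs. Q k \<omega> = xs ! k}"

definition cylinder_prob :: "nat list \<Rightarrow> real" where
  "cylinder_prob xs = p0 (hd xs) * path_weight p (hd xs) (tl xs)"

lemma cylinder_sets[measurable]: "cylinder xs \<in> sets M"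
  unfolding cylinder_def by measurable

lemma path_prefix_eq_iff: "length xs = m \<Longrightarrow> path_prefix \<omega> m = xs \<longleftrightarrow> (\<forall>k<m. Q k \<omega> = xs ! k)"
  unfolding path_prefix_def list_eq_iff_nth_eq by auto

lemma path_prefix_measurable[measurable]: "(\<lambda>\<omega>. path_prefix \<omega> m) \<in> measurable M (count_space UNIV)"
proof (rule measurable_count_space_eq_countable[THEN iffD2])
  have "(\<lambda>\<omega>. path_prefix \<omega> m) -` {xs} \<inter> space M = (if length xs = m then cylinder xs else {})" for xs
  proof (cases "length xs = m")
    case True
    then show ?thesis unfolding cylinder_def by (auto simp: path_prefix_eq_iff)
  next
    case False
    then show ?thesis unfolding path_prefix_def by auto
  qed
  then show "(\<lambda>\<omega>. path_prefix \<omega> m) \<in> space M \<rightarrow> UNIV \<and>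
      (\<forall>xs\<in>UNIV. (\<lambda>\<omega>. path_prefix \<omega> m) -` {xs} \<inter> space M \<in> sets M)"
    by simp
qed simp

lemma length_path_prefix[simp]: "length (path_prefix \<omega> n) = n"
  unfolding path_prefix_def by simp

lemma path_prefix_in_cylinder: "\<omega> \<in> space M \<Longrightarrow> \<omega> \<in> cylinder (path_prefix \<omega> n)"
  unfolding cylinder_def path_prefix_def by simp

lemma path_prefix_nth: "t < m \<Longrightarrow> path_prefix \<omega> m ! t = Q t \<omega>"
  unfolding path_prefix_def by simp

lemma prob_cylinder: "xs \<noteq> [] \<Longrightarrow> prob (cylinder xs) = cylinder_prob xs"
proof -
  assume "xs \<noteq> []"
  then obtain x ys where xs: "xs = x # ys" by (cases xs) auto
  have "{\<omega> \<in> space M. \<forall>k\<le>length ys. Q k \<omega> = xs ! k} = cylinder xs"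
    unfolding cylinder_def xs by (auto simp: less_Suc_eq_le)
  with markov[unfolded markov_chain_law_def, rule_format, of "length ys" "(!) xs"]
  show ?thesis unfolding cylinder_prob_def xs by (simp add: path_weight_eq_prod)
qed

lemma cylinder_prob_append: "cylinder_prob (xs @ i # ys) = cylinder_prob (xs @ [i]) * path_weight p i ys"
  by (cases xs) (auto simp: cylinder_prob_def path_weight_append)

lemma AE_mono: "AE \<omega> in M. mono (\<lambda>t. Q t \<omega>)"
proof -
  have "AE \<omega> in M. xs \<noteq> [] \<longrightarrow> cylinder_prob xs = 0 \<longrightarrow> \<omega> \<notin> cylinder xs" for xs
  proof (cases "xs \<noteq> [] \<and> cylinder_prob xs = 0")
    case True
    then have "cylinder xs \<in> null_sets M"
      by (simp add: prob_cylinder emeasure_eq_measure null_setsI)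
    from AE_not_in[OF this] show ?thesis by eventually_elim auto
  qed auto
  then have "AE \<omega> in M. \<forall>xs. xs \<noteq> [] \<longrightarrow> cylinder_prob xs = 0 \<longrightarrow> \<omega> \<notin> cylinder xs"
    by (subst AE_all_countable) blast
  with AE_space show ?thesis
  proof eventually_elim
    case (elim \<omega>)
    have "Q k \<omega> \<le> Q (Suc k) \<omega>" for k
    proof -
      define xs where "xs = path_prefix \<omega> (Suc (Suc k))"
      have "\<omega> \<in> cylinder xs" unfolding xs_def using elim(1) by (rule path_prefix_in_cylinder)
      then have "cylinder_prob xs \<noteq> 0" using elim(2) unfolding xs_def path_prefix_def by auto
      moreover have "xs = Q 0 \<omega> # map (\<lambda>t. Q t \<omega>) [Suc 0..<Suc (Suc k)]"
        unfolding xs_def path_prefix_def by (simp add: upt_conv_Cons del: upt_Suc)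
      ultimately have "(\<Prod>l<Suc k. p (xs ! l) (xs ! Suc l)) \<noteq> 0"
        unfolding cylinder_prob_def by (auto simp: path_weight_eq_prod simp del: upt_Suc)
      then have "p (xs ! k) (xs ! Suc k) \<noteq> 0" by auto
      moreover have "xs ! k = Q k \<omega>" "xs ! Suc k = Q (Suc k) \<omega>"
        unfolding xs_def by (simp_all add: path_prefix_nth)
      ultimately have "p (Q k \<omega>) (Q (Suc k) \<omega>) \<noteq> 0" by simp
      then show ?thesis using p_incr[of "Q k \<omega>" "Q (Suc k) \<omega>"] Q_pos[OF elim(1)] by (meson not_le)
    qed
    then show ?case by (simp add: mono_iff_le_Suc)
  qed
qed

lemma mem_cylinder_append_iff:
  assumes "length xs = m"
  shows "\<omega> \<in> cylinder (xs @ i # ys) \<longleftrightarrow> \<omega> \<in> space M \<and> path_prefix \<omega> m = xs \<and> Q m \<omega> = i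
    \<and> (\<forall>r<length ys. Q (Suc m + r) \<omega> = ys ! r)"
  using all_less_add_iff[of m "Suc (length ys)" "\<lambda>k. Q k \<omega> = (xs @ i # ys) ! k"] assms
  by (simp add: cylinder_def path_prefix_eq_iff nth_append All_less_Suc2)

text \<open>Monotonicity of the paths makes the relevant set of prefixes finite.\<close>

lemma AE_prefix_event_eq_cylinders:
  "AE \<omega> in M. \<omega> \<in> {\<omega>\<in>space M. B (path_prefix \<omega> m) \<and> Q m \<omega> = i \<and> (\<forall>r<length ys. Q (Suc m + r) \<omega> = ys ! r)}
    \<longleftrightarrow> \<omega> \<in> (\<Union>xs\<in>{xs. set xs \<subseteq> {..i} \<and> length xs = m \<and> B xs}. cylinder (xs @ i # ys))"
  using AE_mono
proof eventually_elim
  case (elim \<omega>)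
  show ?case
  proof
    assume E: "\<omega> \<in> {\<omega>\<in>space M. B (path_prefix \<omega> m) \<and> Q m \<omega> = i \<and> (\<forall>r<length ys. Q (Suc m + r) \<omega> = ys ! r)}"
    have "Q t \<omega> \<le> i" if "t < m" for t using monoD[OF elim, of t m] that E by simp
    then have "path_prefix \<omega> m \<in> {xs. set xs \<subseteq> {..i} \<and> length xs = m \<and> B xs}"
      using E by (auto simp: path_prefix_def)
    moreover have "\<omega> \<in> cylinder (path_prefix \<omega> m @ i # ys)" using E by (simp add: mem_cylinder_append_iff)
    ultimately show "\<omega> \<in> (\<Union>xs\<in>{xs. set xs \<subseteq> {..i} \<and> length xs = m \<and> B xs}. cylinder (xs @ i # ys))"
      by (rule UN_I)
  next
    assume "\<omega> \<in> (\<Union>xs\<in>{xs. set xs \<subseteq> {..i} \<and> length xs = m \<and> B xs}. cylinder (xs @ i # ys))"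
    then show "\<omega> \<in> {\<omega>\<in>space M. B (path_prefix \<omega> m) \<and> Q m \<omega> = i \<and> (\<forall>r<length ys. Q (Suc m + r) \<omega> = ys ! r)}"
      by (auto simp: mem_cylinder_append_iff)
  qed
qed

lemma prob_prefix_event_eq_sum:
  fixes B :: "nat list \<Rightarrow> bool" and m i :: nat and ys :: "nat list"
  defines "S \<equiv> {xs. set xs \<subseteq> {..i} \<and> length xs = m \<and> B xs}"
  shows "prob {\<omega>\<in>space M. B (path_prefix \<omega> m) \<and> Q m \<omega> = i \<and> (\<forall>r<length ys. Q (Suc m + r) \<omega> = ys ! r)}
     = (\<Sum>xs\<in>S. cylinder_prob (xs @ i # ys))"
proof -
  have fin: "finite S" unfolding S_def
    using finite_lists_length_eq[of "{..i}" m] by (rule rev_finite_subset) auto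
  have "prob {\<omega>\<in>space M. B (path_prefix \<omega> m) \<and> Q m \<omega> = i \<and> (\<forall>r<length ys. Q (Suc m + r) \<omega> = ys ! r)}
      = prob (\<Union>xs\<in>S. cylinder (xs @ i # ys))"
    using AE_prefix_event_eq_cylinders fin unfolding S_def by (intro measure_eq_AE) auto
  also have "\<dots> = (\<Sum>xs\<in>S. prob (cylinder (xs @ i # ys)))"
  proof (rule finite_measure_finite_Union[OF fin])
    show "disjoint_family_on (\<lambda>xs. cylinder (xs @ i # ys)) S"
      unfolding disjoint_family_on_def
    proof (intro ballI impI)
      fix xs zs
      assume "xs \<in> S" "zs \<in> S" "xs \<noteq> zs"
      then show "cylinder (xs @ i # ys) \<inter> cylinder (zs @ i # ys) = {}"
        by (auto simp: S_def mem_cylinder_append_iff)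
    qed
  qed auto
  also have "\<dots> = (\<Sum>xs\<in>S. cylinder_prob (xs @ i # ys))"
    by (intro sum.cong refl prob_cylinder) auto
  finally show ?thesis .
qed

lemma markov_property:
  fixes B :: "nat list \<Rightarrow> bool"
  shows "prob {\<omega>\<in>space M. B (path_prefix \<omega> m) \<and> Q m \<omega> = i \<and> (\<forall>r<length ys. Q (Suc m + r) \<omega> = ys ! r)}
     = prob {\<omega>\<in>space M. B (path_prefix \<omega> m) \<and> Q m \<omega> = i} * path_weight p i ys"
proof -
  let ?S = "{xs. set xs \<subseteq> {..i} \<and> length xs = m \<and> B xs}"
  have "(\<Sum>xs\<in>?S. cylinder_prob (xs @ i # ys)) = (\<Sum>xs\<in>?S. cylinder_prob (xs @ [i])) * path_weight p i ys"
    unfolding sum_distrib_right by (intro sum.cong refl cylinder_prob_append)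
  then show ?thesis using prob_prefix_event_eq_sum[of B m i ys] prob_prefix_event_eq_sum[of B m i "[]"]
    by simp
qed

lemma prob_transition:
  "prob {\<omega>\<in>space M. Q n \<omega> = i \<and> Q (Suc n) \<omega> = j} = prob {\<omega>\<in>space M. Q n \<omega> = i} * p i j"
  using markov_property[of "\<lambda>_. True" n i "[j]"] by simp

lemma prob_leave:
  "prob {\<omega>\<in>space M. Q n \<omega> = i \<and> Q (Suc n) \<omega> \<noteq> i} = prob {\<omega>\<in>space M. Q n \<omega> = i} * (1 - p i i)"
proof -
  have "{\<omega>\<in>space M. Q n \<omega> = i \<and> Q (Suc n) \<omega> \<noteq> i} =
     {\<omega>\<in>space M. Q n \<omega> = i} - {\<omega>\<in>space M. Q n \<omega> = i \<and> Q (Suc n) \<omega> = i}" by auto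
  moreover have "prob ({\<omega>\<in>space M. Q n \<omega> = i} - {\<omega>\<in>space M. Q n \<omega> = i \<and> Q (Suc n) \<omega> = i}) =
      prob {\<omega>\<in>space M. Q n \<omega> = i} - prob {\<omega>\<in>space M. Q n \<omega> = i \<and> Q (Suc n) \<omega> = i}"
    by (rule finite_measure_Diff) auto
  ultimately show ?thesis using prob_transition[of n i i] by (simp add: algebra_simps)
qed

lemma prob_initial: "prob {\<omega>\<in>space M. Q 0 \<omega> = k} = p0 k"
proof -
  have "{\<omega>\<in>space M. Q 0 \<omega> = k} = cylinder [k]" unfolding cylinder_def by auto
  then show ?thesis using prob_cylinder[of "[k]"] by (simp add: cylinder_prob_def)
qed

lemma prob_initial_ge: "prob {\<omega>\<in>space M. Q 0 \<omega> \<ge> j} = tail p0 j"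
proof -
  have "prob {\<omega>\<in>space M. Q 0 \<omega> < j} = (\<Sum>k<j. prob {\<omega>\<in>space M. Q 0 \<omega> = k})"
  proof -
    have "{\<omega>\<in>space M. Q 0 \<omega> < j} = (\<Union>k<j. {\<omega>\<in>space M. Q 0 \<omega> = k})" by auto
    then show ?thesis by (simp only:) (rule finite_measure_finite_Union, auto simp: disjoint_family_on_def)
  qed
  moreover have "{\<omega>\<in>space M. Q 0 \<omega> \<ge> j} = space M - {\<omega>\<in>space M. Q 0 \<omega> < j}" by auto
  ultimately show ?thesis by (simp add: prob_compl prob_initial tail_eq_1_minus_sum)
qed

lemma self_transition_le_1: "i \<ge> 1 \<Longrightarrow> p i i \<le> 1"
  using sum_le_suminf[of "\<lambda>j. p i j" "{i}"] p_sums p_nonneg by (simp add: sums_iff)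

end

section \<open>Independent visit counts\<close>

locale independent_visits_chain = weakly_increasing_chain +
  assumes visits_finite: "\<And>j. j \<ge> 1 \<Longrightarrow> measure M {\<omega> \<in> space M. visits Q j \<omega> < \<infinity>} = 1"
    and visits_pos: "\<And>j. j \<ge> 1 \<Longrightarrow> measure M {\<omega> \<in> space M. visits Q j \<omega> = 0} < 1"
    and visits_indep: "indep_vars (\<lambda>_. count_space UNIV) (\<lambda>j. visits Q j) {1..}"
begin

abbreviation h :: "nat \<Rightarrow> real" where
  "h j \<equiv> hit_prob M Q j"

lemma visits_event_sets: "j \<ge> 1 \<Longrightarrow> {\<omega> \<in> space M. P (visits Q j \<omega>)} \<in> sets M"
proof -
  assume "j \<ge> 1"
  with visits_indep have "visits Q j \<in> measurable M (count_space UNIV)"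
    unfolding indep_vars_def by auto
  from measurable_sets[OF this, of "{x. P x}"] show ?thesis
    by (simp add: vimage_def Int_def conj_commute)
qed

lemma prob_not_visited: "j \<ge> 1 \<Longrightarrow> prob {\<omega>\<in>space M. visits Q j \<omega> = 0} = 1 - h j"
proof -
  assume "j \<ge> 1"
  have "{\<omega>\<in>space M. visits Q j \<omega> = 0} = space M - {\<omega> \<in> space M. visits Q j \<omega> \<ge> 1}"
    by (auto simp: visits_ge_1_iff visits_eq_0_iff)
  then show ?thesis unfolding hit_prob_def using prob_compl visits_event_sets[OF \<open>j \<ge> 1\<close>] by simp
qed

lemma hit_prob_pos: "j \<ge> 1 \<Longrightarrow> h j > 0"
  using visits_pos[of j] prob_not_visited[of j] by simp

lemma visit_pattern_event_sets:
  assumes "finite K" "K \<subseteq> {1..}"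
  shows "{\<omega>\<in>space M. \<forall>k\<in>K. visits Q k \<omega> \<in> visit_pattern V k} \<in> sets M"
proof (rule sets.sets_Collect_finite_All[OF _ assms(1)])
  fix k
  assume "k \<in> K"
  with assms(2) show "{\<omega>\<in>space M. visits Q k \<omega> \<in> visit_pattern V k} \<in> sets M"
    using visits_event_sets[of k "\<lambda>x. x \<in> visit_pattern V k"] by auto
qed

lemma prob_visit_pattern:
  assumes "finite K" "K \<subseteq> {1..}"
  shows "prob {\<omega>\<in>space M. \<forall>k\<in>K. visits Q k \<omega> \<in> visit_pattern V k} = (\<Prod>k\<in>K. if k \<in> V then h k else 1 - h k)"
proof -
  have "prob {\<omega>\<in>space M. \<forall>k\<in>K. visits Q k \<omega> \<in> visit_pattern V k}
      = (\<Prod>k\<in>K. prob {\<omega>\<in>space M. visits Q k \<omega> \<in> visit_pattern V k})"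
    using prob_indep_vars_all[OF visits_indep assms] by simp
  also have "\<dots> = (\<Prod>k\<in>K. if k \<in> V then h k else 1 - h k)"
    using assms(2) by (intro prod.cong refl) (auto simp: visit_pattern_def hit_prob_def prob_not_visited)
  finally show ?thesis .
qed

definition regular_path :: "'a \<Rightarrow> bool" where
  "regular_path \<omega> \<longleftrightarrow> \<omega> \<in> space M \<and> mono (\<lambda>t. Q t \<omega>) \<and> (\<forall>j\<ge>1. finite {t. Q t \<omega> = j})"

lemma AE_regular_path: "AE \<omega> in M. regular_path \<omega>"
proof -
  have "AE \<omega> in M. \<forall>j\<ge>1. finite {t. Q t \<omega> = j}"
  proof (subst AE_all_countable, intro allI)
    fix j :: nat
    show "AE \<omega> in M. j \<ge> 1 \<longrightarrow> finite {t. Q t \<omega> = j}"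
    proof (cases "j \<ge> 1")
      case True
      from AE_prob_1[OF visits_finite[OF True]] show ?thesis
      proof eventually_elim
        case (elim \<omega>)
        then have "visits Q j \<omega> < \<infinity>" by blast
        then have "finite {t. Q t \<omega> = j}" by (simp only: visits_less_infinity_iff)
        then show ?case by simp
      qed
    qed simp
  qed
  with AE_mono AE_space show ?thesis
    by eventually_elim (simp add: regular_path_def)
qed

lemma regular_path_space: "regular_path \<omega> \<Longrightarrow> \<omega> \<in> space M"
  unfolding regular_path_def by blast

lemma regular_path_mono: "regular_path \<omega> \<Longrightarrow> mono (\<lambda>t. Q t \<omega>)"
  unfolding regular_path_def by blast

lemma regular_path_finite: "regular_path \<omega> \<Longrightarrow> j \<ge> 1 \<Longrightarrow> finite {t. Q t \<omega> = j}"
  unfolding regular_path_def by blast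

text \<open>A path starts at or above \<open>j\<close> exactly when it skips the states \<open>1, \<dots>, j - 1\<close>.\<close>

lemma tail_eq_prod: "j \<ge> 1 \<Longrightarrow> tail p0 j = (\<Prod>k\<in>{1..<j}. 1 - h k)"
proof -
  assume "j \<ge> 1"
  let ?A = "{\<omega>\<in>space M. \<forall>k\<in>{1..<j}. visits Q k \<omega> \<in> visit_pattern {} k}"
  have "AE \<omega> in M. \<omega> \<in> {\<omega>\<in>space M. Q 0 \<omega> \<ge> j} \<longleftrightarrow> \<omega> \<in> ?A"
    using AE_regular_path
  proof eventually_elim
    case (elim \<omega>)
    note \<omega> = regular_path_space[OF elim]
    have "Q 0 \<omega> \<ge> j \<longleftrightarrow> (\<forall>k\<in>{1..<j}. k \<notin> range (\<lambda>t. Q t \<omega>))"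
    proof
      assume "Q 0 \<omega> \<ge> j"
      then have ge: "Q t \<omega> \<ge> j" for t using monoD[OF regular_path_mono[OF elim], of 0 t] by simp
      show "\<forall>k\<in>{1..<j}. k \<notin> range (\<lambda>t. Q t \<omega>)"
      proof (intro ballI notI)
        fix k
        assume "k \<in> {1..<j}" "k \<in> range (\<lambda>t. Q t \<omega>)"
        then obtain t where "k < j" "Q t \<omega> = k" by auto
        with ge[of t] show False by simp
      qed
    next
      assume "\<forall>k\<in>{1..<j}. k \<notin> range (\<lambda>t. Q t \<omega>)"
      then have "Q 0 \<omega> \<notin> {1..<j}" using rangeI[of "\<lambda>t. Q t \<omega>" 0] by blast
      then show "Q 0 \<omega> \<ge> j" using Q_pos[OF \<omega>, of 0] by auto
    qed
    then show ?case using \<omega> by (simp add: visits_in_visit_pattern_iff)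
  qed
  then have "prob {\<omega>\<in>space M. Q 0 \<omega> \<ge> j} = prob ?A"
    by (intro measure_eq_AE visit_pattern_event_sets) auto
  also have "\<dots> = (\<Prod>k\<in>{1..<j}. 1 - h k)" by (subst prob_visit_pattern) auto
  finally show ?thesis using prob_initial_ge by simp
qed

lemma tail_Suc_eq_mult: "j \<ge> 1 \<Longrightarrow> tail p0 (Suc j) = tail p0 j * (1 - h j)"
  using tail_eq_prod[of j] tail_eq_prod[of "Suc j"] by (simp add: prod.atLeastLessThan_Suc)

lemma hit_prob_eq: "j \<ge> 1 \<Longrightarrow> h j = p0 j / tail p0 j"
  using tail_Suc_eq_mult[of j] tail_Suc[of j] tail_pos[of j] by (simp add: field_simps)

lemma one_minus_hit_prob_eq: "j \<ge> 1 \<Longrightarrow> 1 - h j = tail p0 (Suc j) / tail p0 j"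
  using tail_Suc_eq_mult[of j] tail_pos[of j] by simp

lemma p0_pos: "i \<ge> 1 \<Longrightarrow> p0 i > 0"
  using hit_prob_eq[of i] hit_prob_pos[of i] tail_pos[of i] by (simp add: zero_less_divide_iff)

lemma prod_one_minus_hit_prob_tendsto_0: "(\<lambda>n. \<Prod>j\<in>{1..n}. 1 - h j) \<longlonglongrightarrow> 0"
proof -
  have "(\<Prod>j\<in>{1..n}. 1 - h j) = tail p0 (Suc n)" for n
    using tail_eq_prod[of "Suc n"] by (simp add: atLeastLessThanSuc_atLeastAtMost)
  then show ?thesis using tail_tendsto_0 LIMSEQ_Suc by simp
qed

lemma prod_one_minus_hit_prob_interval:
  "a < b \<Longrightarrow> (\<Prod>k\<in>{Suc a..<b}. 1 - h k) = tail p0 b / tail p0 (Suc a)"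
  using tail_eq_prod[of b] tail_eq_prod[of "Suc a"] tail_pos[of "Suc a"]
    prod.atLeastLessThan_concat[of 1 "Suc a" b "\<lambda>k. 1 - h k"]
  by (simp add: field_simps)

lemma sums_prob_last_visit:
  assumes "i \<ge> 1"
  shows "(\<lambda>n. prob {\<omega>\<in>space M. Q n \<omega> = i \<and> Q (Suc n) \<omega> \<noteq> i}) sums h i"
  unfolding hit_prob_def
proof (rule sums_measure_AE_disjoint)
  show "{\<omega> \<in> space M. 1 \<le> visits Q i \<omega>} \<in> sets M" using visits_event_sets[OF assms] .
  show "AE \<omega> in M. \<forall>n m. \<omega> \<in> {\<omega> \<in> space M. Q n \<omega> = i \<and> Q (Suc n) \<omega> \<noteq> i} \<longrightarrow>
      \<omega> \<in> {\<omega> \<in> space M. Q m \<omega> = i \<and> Q (Suc m) \<omega> \<noteq> i} \<longrightarrow> n = m"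
    using AE_regular_path
  proof eventually_elim
    case (elim \<omega>)
    show ?case using mono_last_visit_unique[OF regular_path_mono[OF elim], of _ i] by auto
  qed
  show "AE \<omega> in M. \<omega> \<in> {\<omega> \<in> space M. 1 \<le> visits Q i \<omega>}
      \<longleftrightarrow> (\<exists>n. \<omega> \<in> {\<omega> \<in> space M. Q n \<omega> = i \<and> Q (Suc n) \<omega> \<noteq> i})"
    using AE_regular_path
  proof eventually_elim
    case (elim \<omega>)
    have "(\<exists>t. Q t \<omega> = i) \<longleftrightarrow> (\<exists>n. Q n \<omega> = i \<and> Q (Suc n) \<omega> \<noteq> i)"
      using last_visit_exists[OF regular_path_finite[OF elim assms]] by blast
    then show ?case using regular_path_space[OF elim] by (simp add: visits_ge_1_iff)
  qed
qed simp

lemma self_transition_less_1: "i \<ge> 1 \<Longrightarrow> p i i < 1"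
proof (rule ccontr)
  assume "i \<ge> 1" "\<not> p i i < 1"
  then have "p i i = 1" using self_transition_le_1[of i] by simp
  with sums_prob_last_visit[OF \<open>i \<ge> 1\<close>] have "(\<lambda>n. 0::real) sums h i" by (simp add: prob_leave)
  then have "h i = 0" using sums_zero sums_unique2 by blast
  with hit_prob_pos[OF \<open>i \<ge> 1\<close>] show False by simp
qed

text \<open>Each visit to \<open>i\<close> is the last one with probability \<open>1 - p i i\<close>.\<close>

lemma sums_prob_at:
  assumes "i \<ge> 1"
  shows "(\<lambda>n. prob {\<omega>\<in>space M. Q n \<omega> = i}) sums (h i / (1 - p i i))"
proof -
  have "1 - p i i \<noteq> 0" using self_transition_less_1[OF assms] by simp
  with sums_divide[OF sums_prob_last_visit[OF assms], of "1 - p i i"] show ?thesis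
    by (simp add: prob_leave)
qed

lemma sums_prob_jump:
  assumes i: "i \<ge> 1" and ij: "i < j"
  shows "(\<lambda>n. prob {\<omega>\<in>space M. Q n \<omega> = i \<and> Q (Suc n) \<omega> = j}) sums (h i * (\<Prod>k\<in>{Suc i..<j}. 1 - h k) * h j)"
proof -
  let ?B = "{\<omega>\<in>space M. \<forall>k\<in>{i..j}. visits Q k \<omega> \<in> visit_pattern {i, j} k}"
  have "(\<lambda>n. prob {\<omega>\<in>space M. Q n \<omega> = i \<and> Q (Suc n) \<omega> = j}) sums prob ?B"
  proof (rule sums_measure_AE_disjoint)
    show "?B \<in> sets M" using i by (intro visit_pattern_event_sets) auto
    show "AE \<omega> in M. \<forall>n m. \<omega> \<in> {\<omega> \<in> space M. Q n \<omega> = i \<and> Q (Suc n) \<omega> = j} \<longrightarrow>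
        \<omega> \<in> {\<omega> \<in> space M. Q m \<omega> = i \<and> Q (Suc m) \<omega> = j} \<longrightarrow> n = m"
      using AE_regular_path
    proof eventually_elim
      case (elim \<omega>)
      show ?case
        using mono_last_visit_unique[OF regular_path_mono[OF elim], of _ i] ij by auto
    qed
    show "AE \<omega> in M. \<omega> \<in> ?B \<longleftrightarrow> (\<exists>n. \<omega> \<in> {\<omega> \<in> space M. Q n \<omega> = i \<and> Q (Suc n) \<omega> = j})"
      using AE_regular_path
    proof eventually_elim
      case (elim \<omega>)
      let ?R = "range (\<lambda>t. Q t \<omega>)"
      have "(\<forall>k\<in>{i..j}. visits Q k \<omega> \<in> visit_pattern {i, j} k) \<longleftrightarrow> (\<forall>k\<in>{i..j}. k \<in> ?R \<longleftrightarrow> k \<in> {i, j})"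
        by (simp only: visits_in_visit_pattern_iff)
      also have "\<dots> \<longleftrightarrow> i \<in> ?R \<and> j \<in> ?R \<and> (\<forall>k. i < k \<longrightarrow> k < j \<longrightarrow> k \<notin> ?R)"
      proof
        assume L: "\<forall>k\<in>{i..j}. k \<in> ?R \<longleftrightarrow> k \<in> {i, j}"
        have "i \<in> ?R" "j \<in> ?R" using L ij by auto
        moreover have "k \<notin> ?R" if "i < k" "k < j" for k using L that by auto
        ultimately show "i \<in> ?R \<and> j \<in> ?R \<and> (\<forall>k. i < k \<longrightarrow> k < j \<longrightarrow> k \<notin> ?R)" by blast
      next
        assume R: "i \<in> ?R \<and> j \<in> ?R \<and> (\<forall>k. i < k \<longrightarrow> k < j \<longrightarrow> k \<notin> ?R)"
        show "\<forall>k\<in>{i..j}. k \<in> ?R \<longleftrightarrow> k \<in> {i, j}"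
        proof
          fix k
          assume "k \<in> {i..j}"
          then have "k = i \<or> k = j \<or> (i < k \<and> k < j)" by auto
          with R show "k \<in> ?R \<longleftrightarrow> k \<in> {i, j}" by auto
        qed
      qed
      also have "\<dots> \<longleftrightarrow> (\<exists>n. Q n \<omega> = i \<and> Q (Suc n) \<omega> = j)"
        using mono_jump_iff[OF regular_path_mono[OF elim] ij] by simp
      finally show ?case using regular_path_space[OF elim] by simp
    qed
  qed simp
  also have "prob ?B = (\<Prod>k\<in>{i..j}. if k \<in> {i, j} then h k else 1 - h k)"
    using i by (intro prob_visit_pattern) auto
  also have "\<dots> = h i * (\<Prod>k\<in>{Suc i..<j}. 1 - h k) * h j"
  proof -
    have "{i..j} = insert i (insert j {Suc i..<j})" using ij by auto
    then show ?thesis using ij by (simp add: mult_ac)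
  qed
  finally show ?thesis .
qed

lemma transition_eq_hit_prob_prod:
  assumes i: "i \<ge> 1" and ij: "i < j"
  shows "p i j = (1 - p i i) * h j * (\<Prod>k\<in>{Suc i..<j}. 1 - h k)"
proof -
  let ?P = "\<Prod>k\<in>{Suc i..<j}. 1 - h k"
  have "(\<lambda>n. prob {\<omega>\<in>space M. Q n \<omega> = i \<and> Q (Suc n) \<omega> = j}) sums (h i / (1 - p i i) * p i j)"
    using sums_mult2[OF sums_prob_at[OF i], of "p i j"] by (simp add: prob_transition)
  with sums_prob_jump[OF i ij] have eq: "h i / (1 - p i i) * p i j = h i * ?P * h j"
    using sums_unique2 by blast
  have nz: "h i \<noteq> 0" "1 - p i i \<noteq> 0"
    using hit_prob_pos[OF i] self_transition_less_1[OF i] by auto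
  have "p i j = (1 - p i i) / h i * (h i / (1 - p i i) * p i j)" using nz by simp
  also have "\<dots> = (1 - p i i) / h i * (h i * ?P * h j)" by (simp only: eq)
  also have "\<dots> = (1 - p i i) * h j * ?P" using nz by simp
  finally show ?thesis .
qed

lemma transition_eq_tail:
  assumes i: "i \<ge> 1" and ij: "i < j"
  shows "p i j = (1 - p i i) * p0 j / tail p0 (i + 1)"
proof -
  have "h j * (\<Prod>k\<in>{Suc i..<j}. 1 - h k) = p0 j / tail p0 j * (tail p0 j / tail p0 (Suc i))"
    using hit_prob_eq[of j] prod_one_minus_hit_prob_interval[OF ij] ij i by simp
  also have "\<dots> = p0 j / tail p0 (Suc i)" using tail_pos[of j] by simp
  finally show ?thesis using transition_eq_hit_prob_prod[OF i ij] by (simp add: mult.assoc)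
qed

end

section \<open>Sojourn times\<close>

context independent_visits_chain
begin

definition run_event :: "nat \<Rightarrow> nat \<Rightarrow> nat \<Rightarrow> 'a set" where
  "run_event j m l = {\<omega>\<in>space M. (m = 0 \<or> Q (m - 1) \<omega> \<noteq> j) \<and> Q m \<omega> = j \<and> (\<forall>r<l. Q (Suc m + r) \<omega> = j)}"

lemma run_event_sets[measurable]: "run_event j m l \<in> sets M"
  unfolding run_event_def by measurable

lemma prob_run_event: "prob (run_event j m l) = prob (run_event j m 0) * p j j ^ l"
proof -
  define B where "B xs \<longleftrightarrow> xs = [] \<or> last xs \<noteq> j" for xs
  have entry: "B (path_prefix \<omega> m) \<longleftrightarrow> m = 0 \<or> Q (m - 1) \<omega> \<noteq> j" for \<omega>
    unfolding B_def by (cases m) (simp_all add: path_prefix_def)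
  have "run_event j m l = {\<omega>\<in>space M. B (path_prefix \<omega> m) \<and> Q m \<omega> = j \<and>
      (\<forall>r<length (replicate l j). Q (Suc m + r) \<omega> = replicate l j ! r)}"
    unfolding run_event_def entry by auto
  moreover have "run_event j m 0 = {\<omega>\<in>space M. B (path_prefix \<omega> m) \<and> Q m \<omega> = j}"
    unfolding run_event_def entry by auto
  ultimately show ?thesis using markov_property[of B m j "replicate l j"] by (simp add: path_weight_replicate)
qed

lemma sums_prob_first_visit:
  assumes "j \<ge> 1"
  shows "(\<lambda>m. prob (run_event j m 0)) sums h j"
  unfolding hit_prob_def
proof (rule sums_measure_AE_disjoint)
  show "{\<omega> \<in> space M. 1 \<le> visits Q j \<omega>} \<in> sets M" using visits_event_sets[OF assms] .
  show "AE \<omega> in M. \<forall>n m. \<omega> \<in> run_event j n 0 \<longrightarrow> \<omega> \<in> run_event j m 0 \<longrightarrow> n = m"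
    using AE_regular_path
  proof eventually_elim
    case (elim \<omega>)
    show ?case
      using mono_first_visit_unique[OF regular_path_mono[OF elim], of _ j] by (auto simp: run_event_def)
  qed
  show "AE \<omega> in M. \<omega> \<in> {\<omega> \<in> space M. 1 \<le> visits Q j \<omega>} \<longleftrightarrow> (\<exists>m. \<omega> \<in> run_event j m 0)"
    using AE_space
  proof eventually_elim
    case (elim \<omega>)
    have "(\<exists>t. Q t \<omega> = j) \<longleftrightarrow> (\<exists>m. (m = 0 \<or> Q (m - 1) \<omega> \<noteq> j) \<and> Q m \<omega> = j)"
      using first_visit_exists[of "\<lambda>t. Q t \<omega>"] by blast
    then show ?case using elim by (simp add: run_event_def visits_ge_1_iff)
  qed
qed simp

lemma mem_run_event_diff_iff:
  assumes "n \<ge> 1"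
  shows "\<omega> \<in> run_event j m (n - 1) - run_event j m n \<longleftrightarrow>
    \<omega> \<in> space M \<and> (m = 0 \<or> Q (m - 1) \<omega> \<noteq> j) \<and> (\<forall>r<n. Q (m + r) \<omega> = j) \<and> Q (m + n) \<omega> \<noteq> j"
proof -
  obtain k where n: "n = Suc k" using assms by (cases n) auto
  have "(Q m \<omega> = j \<and> (\<forall>r<k. Q (Suc m + r) \<omega> = j)) \<longleftrightarrow> (\<forall>r<Suc k. Q (m + r) \<omega> = j)"
    by (simp add: All_less_Suc2)
  moreover have "(\<forall>r<Suc k. Q (Suc m + r) \<omega> = j) \<longleftrightarrow> (\<forall>r<k. Q (Suc m + r) \<omega> = j) \<and> Q (m + Suc k) \<omega> = j"
    by (simp add: All_less_Suc conj_commute)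
  ultimately show ?thesis unfolding run_event_def n by auto
qed

lemma sums_prob_visits_eq:
  assumes j: "j \<ge> 1" and n: "n \<ge> 1"
  shows "(\<lambda>m. prob (run_event j m (n - 1) - run_event j m n)) sums prob {\<omega>\<in>space M. visits Q j \<omega> = enat n}"
proof (rule sums_measure_AE_disjoint)
  show "{\<omega>\<in>space M. visits Q j \<omega> = enat n} \<in> sets M" using visits_event_sets[OF j] .
  show "AE \<omega> in M. \<forall>a b. \<omega> \<in> run_event j a (n - 1) - run_event j a n \<longrightarrow>
      \<omega> \<in> run_event j b (n - 1) - run_event j b n \<longrightarrow> a = b"
    using AE_regular_path
  proof eventually_elim
    case (elim \<omega>)
    show ?case
      using mono_first_visit_unique[OF regular_path_mono[OF elim], of _ j] n
      by (auto simp: run_event_def)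
  qed
  show "AE \<omega> in M. \<omega> \<in> {\<omega>\<in>space M. visits Q j \<omega> = enat n}
      \<longleftrightarrow> (\<exists>m. \<omega> \<in> run_event j m (n - 1) - run_event j m n)"
    using AE_regular_path
  proof eventually_elim
    case (elim \<omega>)
    have "\<omega> \<in> space M" using regular_path_space[OF elim] .
    then have "(\<exists>m. \<omega> \<in> run_event j m (n - 1) - run_event j m n) \<longleftrightarrow>
        (\<exists>m. (m = 0 \<or> Q (m - 1) \<omega> \<noteq> j) \<and> (\<forall>r<n. Q (m + r) \<omega> = j) \<and> Q (m + n) \<omega> \<noteq> j)"
      by (simp only: mem_run_event_diff_iff[OF n] simp_thms)
    with mono_card_visit_times_iff[OF regular_path_mono[OF elim] n, of j] \<open>\<omega> \<in> space M\<close> show ?case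
      by (simp add: visits_eq_enat_iff)
  qed
qed simp

lemma prob_visits_eq:
  assumes "j \<ge> 1"
  shows "prob {\<omega>\<in>space M. visits Q j \<omega> = enat n} =
    (if n = 0 then 1 - h j else h j * (1 - p j j) * p j j ^ (n - 1))"
proof (cases "n = 0")
  case True
  then show ?thesis using prob_not_visited[OF assms] by (simp add: zero_enat_def[symmetric])
next
  case False
  then have n: "n \<ge> 1" by simp
  have "prob (run_event j m (n - 1) - run_event j m n) = prob (run_event j m 0) * ((1 - p j j) * p j j ^ (n - 1))"
    for m
  proof -
    have "run_event j m n \<subseteq> run_event j m (n - 1)" unfolding run_event_def by auto
    then have "prob (run_event j m (n - 1) - run_event j m n) = prob (run_event j m (n - 1)) - prob (run_event j m n)"
      by (intro finite_measure_Diff) auto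
    also have "\<dots> = prob (run_event j m 0) * (p j j ^ (n - 1) - p j j ^ n)"
      by (subst (1 2) prob_run_event) (simp add: algebra_simps)
    also have "p j j ^ (n - 1) - p j j ^ n = (1 - p j j) * p j j ^ (n - 1)"
      using n by (cases n) (auto simp: algebra_simps)
    finally show ?thesis .
  qed
  then have "(\<lambda>m. prob (run_event j m 0) * ((1 - p j j) * p j j ^ (n - 1))) sums prob {\<omega>\<in>space M. visits Q j \<omega> = enat n}"
    using sums_prob_visits_eq[OF assms n] by simp
  moreover have "(\<lambda>m. prob (run_event j m 0) * ((1 - p j j) * p j j ^ (n - 1))) sums (h j * ((1 - p j j) * p j j ^ (n - 1)))"
    by (rule sums_mult2[OF sums_prob_first_visit[OF assms]])
  ultimately show ?thesis using False sums_unique2 by (simp add: mult.assoc)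
qed

lemma self_transition_eq_hit_prob_iff_geometric:
  "(\<forall>i\<ge>1. p i i = h i) \<longleftrightarrow> (\<forall>j\<ge>1. \<exists>q. 0 \<le> q \<and> q < 1 \<and>
     (\<forall>n::nat. prob {\<omega> \<in> space M. visits Q j \<omega> = enat n} = (1 - q) * q ^ n))"
proof
  assume a: "\<forall>i\<ge>1. p i i = h i"
  show "\<forall>j\<ge>1. \<exists>q. 0 \<le> q \<and> q < 1 \<and> (\<forall>n::nat. prob {\<omega> \<in> space M. visits Q j \<omega> = enat n} = (1 - q) * q ^ n)"
  proof (intro allI impI)
    fix j :: nat
    assume j: "j \<ge> 1"
    have "prob {\<omega> \<in> space M. visits Q j \<omega> = enat n} = (1 - h j) * h j ^ n" for n
      using a j by (cases n) (auto simp: prob_visits_eq)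
    moreover have "h j < 1" using a j self_transition_less_1[OF j] by simp
    ultimately show "\<exists>q. 0 \<le> q \<and> q < 1 \<and> (\<forall>n::nat. prob {\<omega> \<in> space M. visits Q j \<omega> = enat n} = (1 - q) * q ^ n)"
      by (intro exI[of _ "h j"]) (auto simp: hit_prob_def)
  qed
next
  assume b: "\<forall>j\<ge>1. \<exists>q. 0 \<le> q \<and> q < 1 \<and> (\<forall>n::nat. prob {\<omega> \<in> space M. visits Q j \<omega> = enat n} = (1 - q) * q ^ n)"
  show "\<forall>i\<ge>1. p i i = h i"
  proof (intro allI impI)
    fix i :: nat
    assume i: "i \<ge> 1"
    obtain q where q: "\<And>n. prob {\<omega> \<in> space M. visits Q i \<omega> = enat n} = (1 - q) * q ^ n"
      using b i by blast
    have "q = h i" using q[of 0] prob_visits_eq[OF i, of 0] by simp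
    with q[of 1] prob_visits_eq[OF i, of 1] hit_prob_pos[OF i] show "p i i = h i" by auto
  qed
qed

lemma self_transition_eq_0_iff_visits_le_1:
  "(\<forall>i\<ge>1. p i i = 0) \<longleftrightarrow> (\<forall>j\<ge>1. prob {\<omega> \<in> space M. visits Q j \<omega> \<le> 1} = 1)"
proof -
  have prob_le_1: "prob {\<omega> \<in> space M. visits Q j \<omega> \<le> 1} = 1 - h j * p j j" if j: "j \<ge> 1" for j
  proof -
    have "{\<omega> \<in> space M. visits Q j \<omega> \<le> 1}
        = {\<omega> \<in> space M. visits Q j \<omega> = enat 0} \<union> {\<omega> \<in> space M. visits Q j \<omega> = enat 1}"
      by (auto simp: enat_le_1_iff)
    moreover have "prob ({\<omega> \<in> space M. visits Q j \<omega> = enat 0} \<union> {\<omega> \<in> space M. visits Q j \<omega> = enat 1}) =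
        prob {\<omega> \<in> space M. visits Q j \<omega> = enat 0} + prob {\<omega> \<in> space M. visits Q j \<omega> = enat 1}"
      using j by (intro finite_measure_Union visits_event_sets) auto
    ultimately show ?thesis using prob_visits_eq[OF j, of 0] prob_visits_eq[OF j, of 1] by (simp add: algebra_simps)
  qed
  show ?thesis
  proof
    assume "\<forall>i\<ge>1. p i i = 0"
    then show "\<forall>j\<ge>1. prob {\<omega> \<in> space M. visits Q j \<omega> \<le> 1} = 1" using prob_le_1 by simp
  next
    assume "\<forall>j\<ge>1. prob {\<omega> \<in> space M. visits Q j \<omega> \<le> 1} = 1"
    then have "h i * p i i = 0" if "i \<ge> 1" for i using prob_le_1[OF that] that by simp
    then show "\<forall>i\<ge>1. p i i = 0" using hit_prob_pos by fastforce
  qed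
qed

lemma markov_chain_law_iff_transitions_eq:
  "markov_chain_law M Q p0 W \<longleftrightarrow> (\<forall>i\<ge>1. \<forall>j. W i j = p i j)"
proof (rule markov_chain_law_iff_same_transitions[OF markov p0_zero p0_pos])
  show "p i 0 = 0" if "i \<ge> 1" for i using p_incr[OF that] that by simp
qed

lemma self_transition_eq_hit_prob_iff_weak_record:
  "(\<forall>i\<ge>1. p i i = h i) \<longleftrightarrow> markov_chain_law M Q p0 (weak_record_matrix p0)"
proof -
  have "weak_record_matrix p0 i j = p i j \<longleftrightarrow> p i i = h i" if "i \<ge> 1" "i < j" for i j
  proof -
    let ?c = "p0 j / tail p0 (i + 1)"
    have "?c > 0" using p0_pos[of j] tail_pos[of "i + 1"] that by simp
    have "weak_record_matrix p0 i j = tail p0 (Suc i) / tail p0 i * ?c"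
      using that tail_pos[of "Suc i"] by (simp add: weak_record_matrix_def)
    also have "\<dots> = (1 - h i) * ?c" using one_minus_hit_prob_eq[OF that(1)] by simp
    finally show ?thesis using transition_eq_tail[OF that] \<open>?c > 0\<close> by auto
  qed
  moreover have "weak_record_matrix p0 i i = p i i \<longleftrightarrow> p i i = h i" if "i \<ge> 1" for i
    using hit_prob_eq[OF that] by (auto simp: weak_record_matrix_def)
  moreover have "weak_record_matrix p0 i j = p i j" if "i \<ge> 1" "j < i" for i j
    using that p_incr by (simp add: weak_record_matrix_def)
  ultimately show ?thesis unfolding markov_chain_law_iff_transitions_eq
    by (metis linorder_neqE_nat)
qed

lemma self_transition_eq_0_iff_strict_record:
  "(\<forall>i\<ge>1. p i i = 0) \<longleftrightarrow> markov_chain_law M Q p0 (strict_record_matrix p0)"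
proof -
  have "strict_record_matrix p0 i j = p i j \<longleftrightarrow> p i i = 0" if "i \<ge> 1" "i < j" for i j
  proof -
    let ?c = "p0 j / tail p0 (i + 1)"
    have "?c > 0" using p0_pos[of j] tail_pos[of "i + 1"] that by simp
    have "strict_record_matrix p0 i j = 1 * ?c" using that by (simp add: strict_record_matrix_def)
    then show ?thesis using transition_eq_tail[OF that] \<open>?c > 0\<close> by auto
  qed
  moreover have "strict_record_matrix p0 i i = p i i \<longleftrightarrow> p i i = 0" for i
    by (auto simp: strict_record_matrix_def)
  moreover have "strict_record_matrix p0 i j = p i j" if "i \<ge> 1" "j < i" for i j
    using that p_incr by (simp add: strict_record_matrix_def)
  ultimately show ?thesis unfolding markov_chain_law_iff_transitions_eq
    by (metis linorder_neqE_nat)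
qed

end

section \<open>The jump chain\<close>

context independent_visits_chain
begin

lemma regular_path_infinite_range: "regular_path \<omega> \<Longrightarrow> infinite (range (\<lambda>t. Q t \<omega>))"
proof
  assume reg: "regular_path \<omega>" and fin: "finite (range (\<lambda>t. Q t \<omega>))"
  have "UNIV = (\<Union>r\<in>range (\<lambda>t. Q t \<omega>). {t. Q t \<omega> = r})" by auto
  moreover have "finite {t. Q t \<omega> = r}" if "r \<in> range (\<lambda>t. Q t \<omega>)" for r
    using that regular_path_finite[OF reg] Q_pos[OF regular_path_space[OF reg]] by auto
  ultimately have "finite (UNIV :: nat set)" using fin by (metis finite_UN_I)
  then show False by simp
qed

text \<open>Splitting by whether the range of the path is finite (where \<open>enumerate\<close> has junk values)
  shows that the events of the jump chain are measurable.\<close>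

lemma jump_event_eq:
  "{\<omega>\<in>space M. \<forall>k\<le>n. jump_chain Q k \<omega> = s k} =
    {\<omega>\<in>space M. \<not> (\<exists>N. \<forall>t. Q t \<omega> \<le> N) \<and> strict_mono_on {..n} s \<and>
        (\<forall>y\<le>s n. (\<exists>t. Q t \<omega> = y) \<longleftrightarrow> y \<in> s ` {..n})}
    \<union> (\<Union>A\<in>{A. finite A \<and> (\<forall>k\<le>n. enumerate A k = s k)}.
        {\<omega>\<in>space M. (\<forall>t. Q t \<omega> \<in> A) \<and> (\<forall>a. a \<in> A \<longrightarrow> (\<exists>t. Q t \<omega> = a))})"
proof -
  have range_eq: "(\<forall>t. Q t \<omega> \<in> A) \<and> (\<forall>a. a \<in> A \<longrightarrow> (\<exists>t. Q t \<omega> = a)) \<longleftrightarrow> range (\<lambda>t. Q t \<omega>) = A" for \<omega> A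
    by auto
  have bounded: "(\<exists>N. \<forall>t. Q t \<omega> \<le> N) \<longleftrightarrow> finite (range (\<lambda>t. Q t \<omega>))" for \<omega>
    by (auto simp: finite_nat_set_iff_bounded_le)
  have "(\<forall>k\<le>n. enumerate (range (\<lambda>t. Q t \<omega>)) k = s k) \<longleftrightarrow>
      strict_mono_on {..n} s \<and> (\<forall>y\<le>s n. (\<exists>t. Q t \<omega> = y) \<longleftrightarrow> y \<in> s ` {..n})"
    if "infinite (range (\<lambda>t. Q t \<omega>))" for \<omega>
  proof (cases "strict_mono_on {..n} s")
    case True
    then have sub: "s ` {..n} \<subseteq> {..s n}" using strict_mono_on_leD[OF True] by auto
    show ?thesis unfolding enumerate_atMost_eq_iff[OF that] Int_atMost_eq_iff[OF sub]
      using True by (simp add: image_iff eq_commute)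
  next
    case False
    then show ?thesis unfolding enumerate_atMost_eq_iff[OF that] by simp
  qed
  then show ?thesis unfolding jump_chain_def range_eq bounded by auto
qed

lemma jump_event_sets: "{\<omega>\<in>space M. \<forall>k\<le>n. jump_chain Q k \<omega> = s k} \<in> sets M"
proof -
  have "countable {A :: nat set. finite A \<and> (\<forall>k\<le>n. enumerate A k = s k)}"
    by (rule countable_subset[OF _ countable_Collect_finite]) auto
  moreover have "{\<omega>\<in>space M. (\<forall>t. Q t \<omega> \<in> A) \<and> (\<forall>a. a \<in> A \<longrightarrow> (\<exists>t. Q t \<omega> = a))} \<in> sets M"
    for A :: "nat set"
    by measurable
  moreover have "{\<omega>\<in>space M. \<not> (\<exists>N. \<forall>t. Q t \<omega> \<le> N) \<and> strict_mono_on {..n} s \<and>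
      (\<forall>y\<le>s n. (\<exists>t. Q t \<omega> = y) \<longleftrightarrow> y \<in> s ` {..n})} \<in> sets M"
    by measurable
  ultimately show ?thesis unfolding jump_event_eq by (intro sets.Un sets.countable_UN'') auto
qed

lemma AE_jump_event_iff:
  "AE \<omega> in M. (\<forall>k\<le>n. jump_chain Q k \<omega> = s k) \<longleftrightarrow>
    strict_mono_on {..n} s \<and> s 0 \<ge> 1 \<and> (\<forall>k\<in>{1..s n}. visits Q k \<omega> \<in> visit_pattern (s ` {..n}) k)"
  using AE_regular_path
proof eventually_elim
  case (elim \<omega>)
  let ?R = "range (\<lambda>t. Q t \<omega>)"
  have "0 \<notin> ?R"
  proof
    assume "0 \<in> ?R"
    then obtain t where "Q t \<omega> = 0" by auto
    with Q_pos[OF regular_path_space[OF elim], of t] show False by simp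
  qed
  have "(\<forall>k\<le>n. jump_chain Q k \<omega> = s k) \<longleftrightarrow> strict_mono_on {..n} s \<and> ?R \<inter> {..s n} = s ` {..n}"
    unfolding jump_chain_def by (rule enumerate_atMost_eq_iff[OF regular_path_infinite_range[OF elim]])
  also have "\<dots> \<longleftrightarrow> strict_mono_on {..n} s \<and> s 0 \<ge> 1 \<and> (\<forall>k\<in>{1..s n}. visits Q k \<omega> \<in> visit_pattern (s ` {..n}) k)"
  proof (cases "strict_mono_on {..n} s")
    case True
    show ?thesis unfolding inter_atMost_eq_image_iff[OF True \<open>0 \<notin> ?R\<close>] visits_in_visit_pattern_iff
      using True by simp
  qed simp
  finally show ?case .
qed

lemma prob_jump_event:
  assumes "strict_mono_on {..n} s" "s 0 \<ge> 1"
  shows "prob {\<omega>\<in>space M. \<forall>k\<le>n. jump_chain Q k \<omega> = s k}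
    = (\<Prod>k\<in>{1..s n}. if k \<in> s ` {..n} then h k else 1 - h k)"
proof -
  have "prob {\<omega>\<in>space M. \<forall>k\<le>n. jump_chain Q k \<omega> = s k}
      = prob {\<omega>\<in>space M. \<forall>k\<in>{1..s n}. visits Q k \<omega> \<in> visit_pattern (s ` {..n}) k}"
    using AE_jump_event_iff[of n s] assms by (intro measure_eq_AE jump_event_sets visit_pattern_event_sets) auto
  also have "\<dots> = (\<Prod>k\<in>{1..s n}. if k \<in> s ` {..n} then h k else 1 - h k)"
    by (intro prob_visit_pattern) auto
  finally show ?thesis .
qed

lemma prob_jump_event_eq_0:
  assumes "\<not> (strict_mono_on {..n} s \<and> s 0 \<ge> 1)"
  shows "prob {\<omega>\<in>space M. \<forall>k\<le>n. jump_chain Q k \<omega> = s k} = 0"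
proof -
  have "prob {\<omega>\<in>space M. \<forall>k\<le>n. jump_chain Q k \<omega> = s k} = prob {}"
    using AE_jump_event_iff[of n s] assms by (intro measure_eq_AE jump_event_sets) auto
  then show ?thesis by simp
qed

text \<open>Each step from \<open>s k\<close> to \<open>s (k + 1)\<close> contributes the skipped states and the hit of \<open>s (k + 1)\<close>,
  which telescopes to the strict record transition probability.\<close>

lemma prod_visit_pattern_eq:
  assumes "strict_mono_on {..n} s" "s 0 \<ge> 1"
  shows "(\<Prod>k\<in>{1..s n}. if k \<in> s ` {..n} then h k else 1 - h k)
       = p0 (s 0) * (\<Prod>k<n. strict_record_matrix p0 (s k) (s (Suc k)))"
  using assms
proof (induction n)
  case 0
  have "{1..s 0} = insert (s 0) {1..<s 0}" using 0 by auto
  then have "(\<Prod>k\<in>{1..s 0}. if k \<in> s ` {..0} then h k else 1 - h k)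
      = h (s 0) * (\<Prod>k\<in>{1..<s 0}. if k = s 0 then h k else 1 - h k)" by simp
  also have "(\<Prod>k\<in>{1..<s 0}. if k = s 0 then h k else 1 - h k) = (\<Prod>k\<in>{1..<s 0}. 1 - h k)"
    by (intro prod.cong) auto
  also have "\<dots> = tail p0 (s 0)" using tail_eq_prod[OF 0(2)] by simp
  finally show ?case using hit_prob_eq[OF 0(2)] tail_pos[of "s 0"] by simp
next
  case (Suc n)
  define a where "a = s n"
  define b where "b = s (Suc n)"
  have sm: "strict_mono_on {..n} s" using Suc.prems(1) by (rule monotone_on_subset) auto
  have ab: "a < b" using Suc.prems(1) unfolding a_def b_def by (simp add: strict_mono_onD)
  have a1: "a \<ge> 1" using strict_mono_on_leD[OF sm, of 0 n] Suc.prems(2) unfolding a_def by simp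
  have below: "s l \<le> a" if "l \<le> n" for l using strict_mono_on_leD[OF sm, of l n] that unfolding a_def by simp
  let ?f = "\<lambda>k. if k \<in> s ` {..Suc n} then h k else 1 - h k"
  let ?g = "\<lambda>k. if k \<in> s ` {..n} then h k else 1 - h k"
  have image_Suc: "s ` {..Suc n} = insert b (s ` {..n})" unfolding b_def by (auto simp: atMost_Suc)
  have split: "prod f {1..b} = prod f {1..<Suc a} * prod f {Suc a..<b} * f b" for f :: "nat \<Rightarrow> real"
  proof -
    have "prod f {1..b} = prod f {1..<Suc b}" by (simp only: atLeastLessThanSuc_atLeastAtMost)
    also have "\<dots> = prod f {1..<Suc a} * prod f {Suc a..<Suc b}"
      using ab a1 by (intro prod.atLeastLessThan_concat[symmetric]) simp_all
    also have "prod f {Suc a..<Suc b} = prod f {Suc a..<b} * f b" using ab by (simp add: prod.atLeastLessThan_Suc)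
    finally show ?thesis by (simp add: mult.assoc)
  qed
  have "prod ?f {1..b} = prod ?f {1..<Suc a} * prod ?f {Suc a..<b} * ?f b" by (rule split)
  also have "prod ?f {1..<Suc a} = prod ?g {1..a}"
    using ab by (intro prod.cong) (auto simp: image_Suc atLeastLessThanSuc_atLeastAtMost)
  also have "prod ?f {Suc a..<b} = (\<Prod>k\<in>{Suc a..<b}. 1 - h k)"
    using below by (intro prod.cong refl) (force simp: image_Suc)
  also have "?f b = h b" by (simp add: image_Suc)
  also have "prod ?g {1..a} = p0 (s 0) * (\<Prod>k<n. strict_record_matrix p0 (s k) (s (Suc k)))"
    unfolding a_def using Suc.IH[OF sm Suc.prems(2)] .
  also have "p0 (s 0) * (\<Prod>k<n. strict_record_matrix p0 (s k) (s (Suc k))) * (\<Prod>k\<in>{Suc a..<b}. 1 - h k) * h b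
      = p0 (s 0) * (\<Prod>k<n. strict_record_matrix p0 (s k) (s (Suc k))) * strict_record_matrix p0 a b"
  proof -
    have "(\<Prod>k\<in>{Suc a..<b}. 1 - h k) * h b = strict_record_matrix p0 a b"
      using prod_one_minus_hit_prob_interval[OF ab] hit_prob_eq[of b] tail_pos[of b] ab a1
      by (simp add: strict_record_matrix_def)
    then show ?thesis by (simp only: mult.assoc)
  qed
  finally show ?case unfolding a_def b_def by simp
qed

lemma jump_chain_strict_record:
  "markov_chain_law M (jump_chain Q) p0 (strict_record_matrix p0)"
  unfolding markov_chain_law_def
proof (intro allI)
  fix n and s :: "nat \<Rightarrow> nat"
  show "prob {\<omega> \<in> space M. \<forall>k\<le>n. jump_chain Q k \<omega> = s k} =
      p0 (s 0) * (\<Prod>k<n. strict_record_matrix p0 (s k) (s (Suc k)))"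
  proof (cases "strict_mono_on {..n} s \<and> s 0 \<ge> 1")
    case True
    then show ?thesis using prob_jump_event prod_visit_pattern_eq by simp
  next
    case False
    then have "s 0 = 0 \<or> (\<exists>k<n. strict_record_matrix p0 (s k) (s (Suc k)) = 0)"
      by (auto simp: strict_mono_on_atMost_iff strict_record_matrix_def)
    then have "p0 (s 0) * (\<Prod>k<n. strict_record_matrix p0 (s k) (s (Suc k))) = 0"
      using p0_zero by auto
    with prob_jump_event_eq_0[OF False] show ?thesis by simp
  qed
qed

end

theorem mainTheorem11:
  fixes M :: "'a measure" and Q :: "nat \<Rightarrow> 'a \<Rightarrow> nat"
    and p0 :: "nat \<Rightarrow> real" and p :: "nat \<Rightarrow> nat \<Rightarrow> real"
  assumes M: "prob_space M"
    and Q_meas: "\<And>k. Q k \<in> measurable M (count_space UNIV)"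
    and Q_pos: "\<And>k \<omega>. \<omega> \<in> space M \<Longrightarrow> Q k \<omega> \<ge> 1"
    and p0_nonneg: "\<And>j. p0 j \<ge> 0"
    and p0_zero: "p0 0 = 0"
    and p0_sums: "p0 sums 1"
    and p0_inf: "infinite {j. p0 j > 0}"
    and p_nonneg: "\<And>i j. i \<ge> 1 \<Longrightarrow> p i j \<ge> 0"
    and p_sums: "\<And>i. i \<ge> 1 \<Longrightarrow> (\<lambda>j. p i j) sums 1"
    and p_incr: "\<And>i j. i \<ge> 1 \<Longrightarrow> j < i \<Longrightarrow> p i j = 0"
    and markov: "markov_chain_law M Q p0 p"
    and G_fin: "\<And>j. j \<ge> 1 \<Longrightarrow> measure M {\<omega> \<in> space M. visits Q j \<omega> < \<infinity>} = 1"
    and G_pos: "\<And>j. j \<ge> 1 \<Longrightarrow> measure M {\<omega> \<in> space M. visits Q j \<omega> = 0} < 1"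
    and G_indep: "prob_space.indep_vars M (\<lambda>_. count_space UNIV) (\<lambda>j. visits Q j) {1..}"
  shows
    "(\<forall>j\<ge>1. hit_prob M Q j = p0 j / tail p0 j)
     \<and> (\<lambda>n. \<Prod>j\<in>{1..n}. 1 - hit_prob M Q j) \<longlonglongrightarrow> 0
     \<and> (\<forall>i\<ge>1. p i i < 1)
     \<and> (\<forall>i\<ge>1. \<forall>j>i.
          p i j = (1 - p i i) * hit_prob M Q j * (\<Prod>k\<in>{i+1..<j}. 1 - hit_prob M Q k)
        \<and> p i j = (1 - p i i) * p0 j / tail p0 (i + 1))
     \<and> (((\<forall>i\<ge>1. p i i = hit_prob M Q i)
           \<longleftrightarrow> (\<forall>j\<ge>1. \<exists>q. 0 \<le> q \<and> q < 1 \<and>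
                 (\<forall>n::nat. measure M {\<omega> \<in> space M. visits Q j \<omega> = enat n} = (1 - q) * q ^ n)))
        \<and> ((\<forall>i\<ge>1. p i i = hit_prob M Q i)
           \<longleftrightarrow> markov_chain_law M Q p0 (weak_record_matrix p0)))
     \<and> (((\<forall>i\<ge>1. p i i = 0)
           \<longleftrightarrow> (\<forall>j\<ge>1. measure M {\<omega> \<in> space M. visits Q j \<omega> \<le> 1} = 1))
        \<and> ((\<forall>i\<ge>1. p i i = 0)
           \<longleftrightarrow> markov_chain_law M Q p0 (strict_record_matrix p0)))
     \<and> markov_chain_law M (jump_chain Q) p0 (strict_record_matrix p0)"
proof -
  interpret independent_visits_chain M Q p0 p
    unfolding independent_visits_chain_def independent_visits_chain_axioms_def
      weakly_increasing_chain_def weakly_increasing_chain_axioms_def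
    using assms by blast
  have transitions: "\<forall>i\<ge>1. \<forall>j>i.
      p i j = (1 - p i i) * hit_prob M Q j * (\<Prod>k\<in>{i+1..<j}. 1 - hit_prob M Q k)
      \<and> p i j = (1 - p i i) * p0 j / tail p0 (i + 1)"
    using transition_eq_hit_prob_prod transition_eq_tail by simp
  show ?thesis
    using hit_prob_eq prod_one_minus_hit_prob_tendsto_0 self_transition_less_1 transitions
      self_transition_eq_hit_prob_iff_geometric self_transition_eq_hit_prob_iff_weak_record
      self_transition_eq_0_iff_visits_le_1 self_transition_eq_0_iff_strict_record
      jump_chain_strict_record
    by blast
qed

end
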